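(* For every $c\ge c_*=\frac2{\sqrt3}$, $2h_1(c)+h_2(c)>\pi$.
   Context: Let $K(R)=\frac{\exp(\frac{R^2-1}{2})}{R}$ for $R>0$ (strictly decreasing on $(0,1]$, strictly increasing on $[1,\infty)$, $K(1)=1$). For $s\ge1$ let $R^-(s)\in(0,1]$, $R^+(s)\in[1,\infty)$ be the solutions of $K(R)=s$. For $c\ge c_*$ define $h_1(c)=\int_{\pi/3}^{2\pi/3}\frac{d\psi}{1-[R^-(c\sin\psi)]^2}$ and $h_2(c)=\int_{R^-(\frac{\sqrt3}{2}c)}^{R^+(\frac{\sqrt3}{2}c)}\frac{K(R)\,dR}{R\sqrt{c^2-K(R)^2}}$. *)

theory Defs
  imports "HOL-Analysis.Analysis"
begin

definition K :: "real \<Rightarrow> real" where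
  "K R = exp ((R\<^sup>2 - 1) / 2) / R"

definition Rminus :: "real \<Rightarrow> real" where
  "Rminus s = (THE R. 0 < R \<and> R \<le> 1 \<and> K R = s)"

definition Rplus :: "real \<Rightarrow> real" where
  "Rplus s = (THE R. 1 \<le> R \<and> K R = s)"

definition c_star :: real where
  "c_star = 2 / sqrt 3"

definition h1 :: "real \<Rightarrow> real" where
  "h1 c = integral {pi/3 .. 2*pi/3} (\<lambda>\<psi>. 1 / (1 - (Rminus (c * sin \<psi>))\<^sup>2))"

definition h2 :: "real \<Rightarrow> real" where
  "h2 c = integral {Rminus (sqrt 3 / 2 * c) .. Rplus (sqrt 3 / 2 * c)}
            (\<lambda>R. K R / (R * sqrt (c\<^sup>2 - (K R)\<^sup>2)))"

end

theory Submission
  imports Defs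
begin

text \<open>Both integrals are estimated from below with \<open>exp x \<ge> 1 + x\<close>, i.e. \<open>K R * R \<ge> (1 + R\<^sup>2) / 2\<close>.
  Since \<open>Rminus\<close> is decreasing, \<open>h1 c \<ge> (pi / 3) / (1 - (Rminus c)\<^sup>2)\<close>, which exceeds \<open>pi / 2\<close> for
  \<open>c \<le> 1.23\<close>, where \<open>h2 c \<ge> 0\<close> then suffices. For larger \<open>c\<close> the integral \<open>h2 c\<close> is split at \<open>R = 1\<close>;
  on \<open>[Rminus (sqrt 3 / 2 * c), 1]\<close> the integrand is compared with the derivative of
  \<open>arcsin (K R / c)\<close>, which contributes \<open>pi / 3 - arcsin (1 / c)\<close>. As \<open>arcsin (1 / c) \<le> 1 / sqrt (c\<^sup>2 - 1)\<close>,
  the claim reduces to a numerical inequality, verified on finitely many intervals of \<open>c\<close> with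
  Taylor bounds for \<open>exp\<close>. At \<open>c = c_star\<close> the integrand of \<open>h1\<close> blows up at both endpoints, but only
  like \<open>((\<psi> - pi / 3) * (2 * pi / 3 - \<psi>)) powr (-1/2)\<close>, so it is still integrable.\<close>

lemma has_integral_inverse_sqrt_product:
  fixes a b :: real
  assumes "a < b"
  shows "((\<lambda>x. 1 / sqrt ((x - a) * (b - x))) has_integral pi) {a..b}"
proof -
  define y where "y x = (2 * x - a - b) / (b - a)" for x
  have "((\<lambda>x. 1 / sqrt ((x - a) * (b - x))) has_integral arcsin (y b) - arcsin (y a)) {a..b}"
  proof (rule fundamental_theorem_of_calculus_interior)
    show "continuous_on {a..b} (\<lambda>x. arcsin (y x))"
      using assms unfolding y_def[abs_def]
      by (intro continuous_on_arcsin continuous_intros) (auto simp: divide_simps)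
    fix x assume x: "x \<in> {a<..<b}"
    then have y: "-1 < y x" "y x < 1"
      using assms by (auto simp: y_def divide_simps)
    have "(y has_real_derivative 2 / (b - a)) (at x)"
      unfolding y_def[abs_def] by (rule DERIV_cdivide) (auto intro!: derivative_eq_intros)
    from DERIV_chain2[OF DERIV_arcsin[OF y] this]
    have "((\<lambda>x. arcsin (y x)) has_real_derivative inverse (sqrt (1 - (y x)\<^sup>2)) * (2 / (b - a))) (at x)" .
    moreover have "1 / sqrt ((x - a) * (b - x)) = inverse (sqrt (1 - (y x)\<^sup>2)) * (2 / (b - a))"
    proof -
      have "((b - a) / 2)\<^sup>2 * (1 - (y x)\<^sup>2) = ((b - a)\<^sup>2 - (2 * x - a - b)\<^sup>2) / 4"
        using assms by (simp add: y_def power_divide field_simps)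
      also have "\<dots> = (x - a) * (b - x)"
        by (simp add: power2_eq_square field_simps)
      finally have "sqrt ((x - a) * (b - x)) = sqrt (((b - a) / 2)\<^sup>2 * (1 - (y x)\<^sup>2))"
        by simp
      also have "\<dots> = (b - a) / 2 * sqrt (1 - (y x)\<^sup>2)"
        using assms by (simp add: real_sqrt_mult)
      finally have sqrt_eq: "sqrt ((x - a) * (b - x)) = (b - a) / 2 * sqrt (1 - (y x)\<^sup>2)" .
      show ?thesis
        unfolding sqrt_eq by (simp add: inverse_eq_divide mult.commute)
    qed
    ultimately show "((\<lambda>x. arcsin (y x)) has_vector_derivative 1 / sqrt ((x - a) * (b - x))) (at x)"
      by (simp add: has_real_derivative_iff_has_vector_derivative[symmetric])
  qed (use assms in simp)
  moreover have "y b = 1" "y a = -1"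
    using assms by (simp_all add: y_def divide_simps)
  ultimately show ?thesis
    by simp
qed

lemma integral_ge_antiderivative_diff:
  fixes F f g :: "real \<Rightarrow> real"
  assumes "a \<le> b"
    and "\<And>x. x \<in> {a..b} \<Longrightarrow> (F has_real_derivative f x) (at x within {a..b})"
    and "\<And>x. x \<in> {a..b} \<Longrightarrow> f x \<le> g x"
    and "g integrable_on {a..b}"
  shows "F b - F a \<le> integral {a..b} g"
proof -
  have "(f has_integral F b - F a) {a..b}"
    using assms(1,2)
    by (intro fundamental_theorem_of_calculus) (simp_all add: has_real_derivative_iff_has_vector_derivative)
  then show ?thesis
    using has_integral_le[OF _ integrable_integral[OF assms(4)]] assms(3) by blast
qed

lemma arcsin_inverse_le:
  fixes c :: real
  assumes "1 < c"
  shows "arcsin (1 / c) \<le> 1 / sqrt (c\<^sup>2 - 1)"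
proof -
  have "sqrt (1 - (1 / c)\<^sup>2) = sqrt (c\<^sup>2 - 1) / c"
    using assms by (simp add: field_simps real_sqrt_divide)
  moreover have "-1 < 1 / c" "1 / c < 1"
    using assms by (simp_all add: less_trans[of "-1" 0])
  ultimately have "arcsin (1 / c) = arctan (1 / sqrt (c\<^sup>2 - 1))"
    using arcsin_arctan[of "1 / c"] assms by simp
  also have "\<dots> \<le> 1 / sqrt (c\<^sup>2 - 1)"
    using assms by (intro arctan_le_self) simp
  finally show ?thesis .
qed

lemma arcsin_sqrt3_half: "arcsin (sqrt 3 / 2) = pi / 3"
  using arcsin_sin[of "pi / 3"] by (simp add: sin_60)

lemma sin_ge_half_self:
  assumes "0 \<le> z" "z \<le> pi / 3"
  shows "z / 2 \<le> sin z"
proof -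
  have "(\<lambda>z. sin z - z / 2) 0 \<le> (\<lambda>z. sin z - z / 2) z"
  proof (rule DERIV_nonneg_imp_increasing_open[of 0 z])
    fix x assume x: "0 < x" "x < z"
    have "cos (pi / 3) \<le> cos x"
      using x assms by (intro cos_monotone_0_pi_le) auto
    then have "0 \<le> cos x - 1 / 2"
      by (simp add: cos_60)
    moreover have "((\<lambda>z. sin z - z / 2) has_real_derivative cos x - 1 / 2) (at x)"
      by (auto intro!: derivative_eq_intros)
    ultimately show "\<exists>d. ((\<lambda>z. sin z - z / 2) has_real_derivative d) (at x) \<and> 0 \<le> d"
      by blast
  qed (use assms in \<open>auto intro!: continuous_intros\<close>)
  then show ?thesis
    by simp
qed

lemma sin_minus_sqrt3_half_ge:
  assumes "pi / 3 \<le> x" "x \<le> 2 * pi / 3"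
  shows "(x - pi / 3) * (2 * pi / 3 - x) / 8 \<le> sin x - sqrt 3 / 2"
proof -
  have "sin x - sqrt 3 / 2 = 2 * sin ((x - pi / 3) / 2) * cos ((x + pi / 3) / 2)"
    using sin_diff_sin[of x "pi / 3"] by (simp add: sin_60)
  also have "cos ((x + pi / 3) / 2) = sin ((2 * pi / 3 - x) / 2)"
    by (simp add: cos_sin_eq field_simps)
  finally have eq: "sin x - sqrt 3 / 2 = 2 * (sin ((x - pi / 3) / 2) * sin ((2 * pi / 3 - x) / 2))"
    by simp
  have "(x - pi / 3) / 4 * ((2 * pi / 3 - x) / 4) \<le> sin ((x - pi / 3) / 2) * sin ((2 * pi / 3 - x) / 2)"
    using sin_ge_half_self[of "(x - pi / 3) / 2"] sin_ge_half_self[of "(2 * pi / 3 - x) / 2"] assms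
    by (intro mult_mono) auto
  then show ?thesis
    unfolding eq by simp
qed

lemma sin_gt_sqrt3_half:
  assumes "pi / 3 < \<psi>" "\<psi> < 2 * pi / 3"
  shows "sqrt 3 / 2 < sin \<psi>"
proof -
  have "0 < (\<psi> - pi / 3) * (2 * pi / 3 - \<psi>) / 8"
    using assms by simp
  with sin_minus_sqrt3_half_ge[of \<psi>] assms show ?thesis
    by linarith
qed

lemma exp_le_Taylor_power:
  assumes "0 \<le> y" "y \<le> real n" "0 < n"
  shows "exp y \<le> (1 + y / n + (y / n)\<^sup>2) ^ n"
proof -
  have "exp y = exp (y / n) ^ n"
    using assms by (simp add: exp_of_nat_mult[symmetric])
  also have "\<dots> \<le> (1 + y / n + (y / n)\<^sup>2) ^ n"
    using exp_bound[of "y / n"] assms by (intro power_mono) (auto simp: field_simps)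
  finally show ?thesis .
qed

lemma exp_ge_Taylor_power:
  assumes "0 \<le> y" "0 < n"
  shows "(1 + y / n + (y / n)\<^sup>2 / 2) ^ n \<le> exp y"
proof -
  have "(1 + y / n + (y / n)\<^sup>2 / 2) ^ n \<le> exp (y / n) ^ n"
    using exp_lower_Taylor_quadratic[of "y / n"] assms by (intro power_mono) auto
  also have "\<dots> = exp y"
    using assms by (simp add: exp_of_nat_mult[symmetric])
  finally show ?thesis .
qed

lemma sqrt3_ge: "1732 / 1000 \<le> sqrt 3"
  by (rule real_le_rsqrt) (simp add: power_divide)

lemma sqrt3_less_2: "sqrt 3 < 2"
  using real_sqrt_less_iff[of 3 "2\<^sup>2"] by simp

section \<open>The function K and its inverse branches\<close>

lemma K_pos: "0 < R \<Longrightarrow> 0 < K R"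
  unfolding K_def by simp

lemma K_one [simp]: "K 1 = 1"
  unfolding K_def by simp

lemma K_mult_self_ge:
  assumes "0 < R"
  shows "(1 + R\<^sup>2) / 2 \<le> K R * R"
proof -
  have "1 + (R\<^sup>2 - 1) / 2 \<le> exp ((R\<^sup>2 - 1) / 2)"
    by (rule exp_ge_add_one_self)
  then show ?thesis
    using assms by (simp add: K_def field_simps)
qed

lemma K_ge_one:
  assumes "0 < R"
  shows "1 \<le> K R"
proof -
  have "2 * R \<le> 1 + R\<^sup>2"
    using sum_power2_ge_zero[of "R - 1" 0] by (simp add: power2_diff)
  then have "R \<le> (1 + R\<^sup>2) / 2"
    by simp
  also have "\<dots> \<le> K R * R"
    using K_mult_self_ge[OF assms] .
  finally have "R \<le> K R * R" .
  with assms show ?thesis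
    by simp
qed

lemma K_has_real_derivative:
  assumes "0 < R"
  shows "(K has_real_derivative K R * (R - 1 / R)) (at R)"
proof -
  have "((\<lambda>R. exp ((R\<^sup>2 - 1) / 2) / R) has_real_derivative
      (exp ((R\<^sup>2 - 1) / 2) * (2 * R / 2) * R - exp ((R\<^sup>2 - 1) / 2)) / (R * R)) (at R)"
    using assms by (auto intro!: derivative_eq_intros)
  then show ?thesis
    using assms by (simp add: K_def[abs_def] field_simps)
qed

lemma continuous_on_K: "continuous_on {0<..} K"
  unfolding K_def[abs_def] by (auto intro!: continuous_intros)

lemma isCont_K: "0 < R \<Longrightarrow> isCont K R"
  using K_has_real_derivative DERIV_isCont by blast

lemma K_strict_antimono:
  assumes "0 < x" "x < y" "y \<le> 1"
  shows "K y < K x"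
proof (rule DERIV_neg_imp_decreasing_open[of x y K])
  show "continuous_on {x..y} K"
    using continuous_on_K by (rule continuous_on_subset) (use assms in auto)
  show "x < y"
    by fact
  fix z assume "x < z" "z < y"
  with assms have z: "0 < z" "z < 1"
    by auto
  then have "z - 1 / z < 0"
    by (simp add: field_simps power2_eq_square[symmetric] power_less_one_iff)
  with z K_pos[of z] have "K z * (z - 1 / z) < 0"
    by (simp add: mult_pos_neg)
  with K_has_real_derivative[OF z(1)] show "\<exists>d. (K has_real_derivative d) (at z) \<and> d < 0"
    by blast
qed

lemma K_strict_mono:
  assumes "1 \<le> x" "x < y"
  shows "K x < K y"
proof (rule DERIV_pos_imp_increasing_open[of x y K])
  show "continuous_on {x..y} K"
    using continuous_on_K by (rule continuous_on_subset) (use assms in auto)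
  show "x < y"
    by fact
  fix z assume "x < z" "z < y"
  with assms have z: "1 < z"
    by auto
  then have "0 < z - 1 / z"
    by (simp add: field_simps less_1_mult)
  with z K_pos[of z] have "0 < K z * (z - 1 / z)"
    by simp
  with K_has_real_derivative[of z] z show "\<exists>d. (K has_real_derivative d) (at z) \<and> 0 < d"
    by auto
qed

lemma K_le_iff_antimono:
  assumes "0 < x" "x \<le> 1" "0 < y" "y \<le> 1"
  shows "K x \<le> K y \<longleftrightarrow> y \<le> x"
  using K_strict_antimono[of x y] K_strict_antimono[of y x] assms
  by (cases x y rule: linorder_cases) auto

lemma K_le_iff_mono:
  assumes "1 \<le> x" "1 \<le> y"
  shows "K x \<le> K y \<longleftrightarrow> x \<le> y"
  using K_strict_mono[of x y] K_strict_mono[of y x] assms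
  by (cases x y rule: linorder_cases) auto

lemma Rminus_exists:
  assumes "1 \<le> s"
  shows "\<exists>R. 0 < R \<and> R \<le> 1 \<and> K R = s"
proof -
  define r where "r = 1 / (2 * s)"
  have r: "0 < r" "r \<le> 1"
    using assms by (auto simp: r_def field_simps)
  have "s = 1 / (2 * r)"
    using assms by (simp add: r_def)
  also have "\<dots> \<le> (1 + r\<^sup>2) / (2 * r)"
    using r by (intro divide_right_mono) auto
  also have "\<dots> \<le> K r"
    using K_mult_self_ge[OF r(1)] r(1) by (simp add: field_simps)
  finally have "K 1 \<le> s" "s \<le> K r"
    using assms by auto
  then obtain R where "r \<le> R" "R \<le> 1" "K R = s"
    using IVT2[of K 1 s r] isCont_K r by force
  with r show ?thesis
    by (intro exI[of _ R]) auto
qed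

lemma Rplus_exists:
  assumes "1 \<le> s"
  shows "\<exists>R. 1 \<le> R \<and> K R = s"
proof -
  define r where "r = 2 * s"
  have r: "1 \<le> r"
    using assms by (simp add: r_def)
  have "s = r\<^sup>2 / (2 * r)"
    using assms by (simp add: r_def power2_eq_square)
  also have "\<dots> \<le> (1 + r\<^sup>2) / (2 * r)"
    using r by (intro divide_right_mono) auto
  also have "\<dots> \<le> K r"
    using K_mult_self_ge[of r] r by (simp add: field_simps)
  finally have "K 1 \<le> s" "s \<le> K r"
    using assms by auto
  then obtain R where "1 \<le> R" "K R = s"
    using IVT[of K 1 s r] isCont_K r by force
  then show ?thesis
    by auto
qed

lemma Rminus:
  assumes "1 \<le> s"
  shows "0 < Rminus s" "Rminus s \<le> 1" "K (Rminus s) = s"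
proof -
  have "\<exists>!R. 0 < R \<and> R \<le> 1 \<and> K R = s"
    using Rminus_exists[OF assms] K_le_iff_antimono by (metis order_antisym order_refl)
  from theI'[OF this] show "0 < Rminus s" "Rminus s \<le> 1" "K (Rminus s) = s"
    unfolding Rminus_def by auto
qed

lemma Rplus:
  assumes "1 \<le> s"
  shows "1 \<le> Rplus s" "K (Rplus s) = s"
proof -
  have "\<exists>!R. 1 \<le> R \<and> K R = s"
    using Rplus_exists[OF assms] K_le_iff_mono by (metis order_antisym order_refl)
  from theI'[OF this] show "1 \<le> Rplus s" "K (Rplus s) = s"
    unfolding Rplus_def by auto
qed

lemma Rminus_le_iff:
  assumes "1 \<le> s" "0 < r" "r \<le> 1"
  shows "Rminus s \<le> r \<longleftrightarrow> K r \<le> s"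
  using K_le_iff_antimono[of r "Rminus s"] Rminus[OF assms(1)] assms by simp

lemma le_Rminus_iff:
  assumes "1 \<le> s" "0 < r" "r \<le> 1"
  shows "r \<le> Rminus s \<longleftrightarrow> s \<le> K r"
  using K_le_iff_antimono[of "Rminus s" r] Rminus[OF assms(1)] assms by simp

lemma le_Rplus_iff:
  assumes "1 \<le> s" "1 \<le> r"
  shows "r \<le> Rplus s \<longleftrightarrow> K r \<le> s"
  using K_le_iff_mono[of r "Rplus s"] Rplus[OF assms(1)] assms by simp

lemma Rminus_K:
  assumes "0 < r" "r \<le> 1"
  shows "Rminus (K r) = r"
  using Rminus_le_iff[of "K r" r] le_Rminus_iff[of "K r" r] K_ge_one assms by force

lemma Rminus_less_one:
  assumes "1 < s"
  shows "Rminus s < 1"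
  using Rminus[of s] assms by (metis K_one order_less_le)

lemma Rminus_sq_less_one:
  assumes "1 < s"
  shows "(Rminus s)\<^sup>2 < 1"
  using Rminus[of s] Rminus_less_one[OF assms] assms by (simp add: power_less_one_iff)

lemma Rminus_antimono:
  assumes "1 \<le> s" "s \<le> t"
  shows "Rminus t \<le> Rminus s"
  using Rminus_le_iff[of t "Rminus s"] Rminus[OF assms(1)] assms by simp

lemma K_le_between_Rminus_Rplus:
  assumes "1 \<le> s" "Rminus s \<le> R" "R \<le> Rplus s"
  shows "K R \<le> s"
proof (cases "R \<le> 1")
  case True
  then show ?thesis
    using Rminus_le_iff[of s R] Rminus[OF assms(1)] assms by simp
next
  case False
  then show ?thesis
    using le_Rplus_iff[of s R] assms by simp
qed

lemma isCont_Rminus: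
  assumes "1 < s"
  shows "isCont Rminus s"
proof -
  define r where "r = Rminus s"
  have r: "0 < r" "r < 1" "K r = s"
    using Rminus[of s] Rminus_less_one[of s] assms by (auto simp: r_def)
  define d where "d = min (r / 2) ((1 - r) / 2)"
  have near: "0 < z \<and> z \<le> 1" if "\<bar>z - r\<bar> \<le> d" for z
    using that r by (auto simp: d_def abs_le_iff min_def split: if_splits)
  have "isCont Rminus (K r)"
  proof (rule isCont_inverse_function[where f = K and x = r and d = d])
    show "0 < d"
      using r by (simp add: d_def)
    show "Rminus (K z) = z" if "\<bar>z - r\<bar> \<le> d" for z
      using near[OF that] by (simp add: Rminus_K)
    show "isCont K z" if "\<bar>z - r\<bar> \<le> d" for z
      using near[OF that] by (simp add: isCont_K)
  qed
  with r show ?thesis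
    by simp
qed

lemma K_eq_inverse_exp:
  assumes "0 < r"
  shows "K r = 1 / (r * exp ((1 - r\<^sup>2) / 2))"
proof -
  have "exp ((r\<^sup>2 - 1) / 2) * exp ((1 - r\<^sup>2) / 2) = 1"
    by (simp add: exp_add[symmetric] add_divide_distrib[symmetric])
  with assms show ?thesis
    by (simp add: K_def field_simps)
qed

text \<open>With \<open>y = (1 - r\<^sup>2) / 2\<close> we have \<open>K r = 1 / (r * exp y)\<close>, and \<open>(1 - r\<^sup>2) / 32 = y / 16\<close> comes
  from \<open>exp y = exp (y / 16) ^ 16\<close>; these certificates are checked by evaluating rationals.\<close>
lemma K_ge_of_Taylor:
  assumes "0 < r" "r \<le> 1"
    and "(1 + (1 - r\<^sup>2) / 32 + ((1 - r\<^sup>2) / 32)\<^sup>2) ^ 16 * r * q \<le> 1"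
  shows "q \<le> K r"
proof (cases "q \<le> 0")
  case True
  then show ?thesis
    using K_pos[OF assms(1)] by linarith
next
  case False
  define y where "y = (1 - r\<^sup>2) / 2"
  have "0 \<le> y"
    using assms(1,2) by (simp add: y_def power_le_one)
  moreover have "y \<le> 16"
    by (simp add: y_def field_simps)
  ultimately have y: "0 \<le> y" "y \<le> 16" .
  define P where "P = (1 + (1 - r\<^sup>2) / 32 + ((1 - r\<^sup>2) / 32)\<^sup>2) ^ 16"
  have "exp y \<le> P"
    using exp_le_Taylor_power[of y 16] y by (simp add: P_def y_def)
  then have "exp y * (r * q) \<le> P * (r * q)"
    using assms(1) False by (intro mult_right_mono) auto
  with assms(3) have "q * (r * exp y) \<le> 1"
    by (simp add: P_def ac_simps)
  then show ?thesis
    using assms(1) by (simp add: K_eq_inverse_exp y_def[symmetric] le_divide_eq)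
qed

lemma K_le_of_Taylor_below_one:
  assumes "0 < r" "r \<le> 1"
    and "1 \<le> (1 + (1 - r\<^sup>2) / 32 + ((1 - r\<^sup>2) / 32)\<^sup>2 / 2) ^ 16 * r * q"
  shows "K r \<le> q"
proof -
  define y where "y = (1 - r\<^sup>2) / 2"
  define P where "P = (1 + (1 - r\<^sup>2) / 32 + ((1 - r\<^sup>2) / 32)\<^sup>2 / 2) ^ 16"
  have y: "0 \<le> y"
    using assms(1,2) by (simp add: y_def power_le_one)
  have P: "0 \<le> P" "P \<le> exp y"
    using exp_ge_Taylor_power[of y 16] y by (simp_all add: P_def y_def)
  have "0 < q"
  proof (rule ccontr)
    assume "\<not> 0 < q"
    then have "P * r * q \<le> 0"
      using P(1) assms(1) by (simp add: mult_nonneg_nonpos)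
    with assms(3) show False
      by (simp add: P_def)
  qed
  then have "P * (r * q) \<le> exp y * (r * q)"
    using P(2) assms(1) by (intro mult_right_mono) auto
  with assms(3) have "1 \<le> q * (r * exp y)"
    by (simp add: P_def ac_simps)
  then show ?thesis
    using assms(1) by (simp add: K_eq_inverse_exp y_def[symmetric] divide_le_eq)
qed

lemma K_le_of_Taylor_above_one:
  assumes "1 \<le> r" "r\<^sup>2 \<le> 33"
    and "(1 + (r\<^sup>2 - 1) / 32 + ((r\<^sup>2 - 1) / 32)\<^sup>2) ^ 16 \<le> r * q"
  shows "K r \<le> q"
proof -
  define x where "x = (r\<^sup>2 - 1) / 2"
  have x: "0 \<le> x" "x \<le> 16"
    using assms(1,2) by (auto simp: x_def one_le_power)
  have "exp x \<le> (1 + (r\<^sup>2 - 1) / 32 + ((r\<^sup>2 - 1) / 32)\<^sup>2) ^ 16"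
    using exp_le_Taylor_power[of x 16] x by (simp add: x_def)
  with assms(3) have "exp x \<le> r * q"
    by linarith
  with assms(1) show ?thesis
    by (simp add: K_def x_def[symmetric] divide_le_eq mult.commute)
qed

lemma K_minus_one_mult_le:
  assumes "0 < R" "K R \<le> 2"
  shows "(K R - 1) * R\<^sup>2 \<le> (1 - R\<^sup>2)\<^sup>2"
proof -
  define s where "s = K R"
  define a where "a = R\<^sup>2"
  have s: "1 \<le> s" "s \<le> 2"
    using K_ge_one assms by (auto simp: s_def)
  have a: "0 < a"
    using assms by (simp add: a_def)
  have "2 * ln s = a - 1 - 2 * ln R"
    using assms by (simp add: s_def a_def K_def ln_div field_simps)
  moreover have "ln a = 2 * ln R"
    using assms by (simp add: a_def ln_realpow)
  moreover have "- ln a \<le> 1 / a - 1"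
    using ln_le_minus_one[of "1 / a"] a by (simp add: ln_div)
  ultimately have "2 * ln s \<le> a - 2 + 1 / a"
    by linarith
  also have "\<dots> = (1 - a)\<^sup>2 / a"
    using a by (simp add: field_simps power2_eq_square)
  finally have upper: "2 * ln s \<le> (1 - a)\<^sup>2 / a" .
  have "(s - 1) * s \<le> (s - 1) * 2"
    using s by (intro mult_left_mono) auto
  then have "s - 1 \<le> 2 * (1 - 1 / s)"
    using s by (simp add: field_simps)
  also have "\<dots> \<le> 2 * ln s"
    using ln_le_minus_one[of "1 / s"] s by (simp add: ln_div)
  finally have "s - 1 \<le> (1 - a)\<^sup>2 / a"
    using upper by linarith
  with a show ?thesis
    by (simp add: s_def a_def pos_le_divide_eq)
qed

lemma c_star_gt_one: "1 < c_star"
  using sqrt3_less_2 by (simp add: c_star_def)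

lemma sqrt3_half_c_star: "sqrt 3 / 2 * c_star = 1"
  by (simp add: c_star_def)

lemma c_star_le: "c_star \<le> 123 / 100"
  using sqrt3_ge by (simp add: c_star_def divide_le_eq)

lemma Rminus_ge_29_50:
  assumes "1 \<le> s" "s \<le> 123 / 100"
  shows "29 / 50 \<le> Rminus s"
proof -
  have "123 / 100 \<le> K (29 / 50)"
    by (rule K_ge_of_Taylor) (simp_all add: power_divide)
  with assms show ?thesis
    using le_Rminus_iff[of s "29 / 50"] by simp
qed

section \<open>The integral h1\<close>

definition h1_integrand :: "real \<Rightarrow> real \<Rightarrow> real" where
  "h1_integrand c \<psi> = 1 / (1 - (Rminus (c * sin \<psi>))\<^sup>2)"

lemma h1_eq_integral: "h1 c = integral {pi / 3 .. 2 * pi / 3} (h1_integrand c)"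
  unfolding h1_def h1_integrand_def ..

lemma one_less_c_sin:
  assumes "c_star \<le> c" "pi / 3 < \<psi>" "\<psi> < 2 * pi / 3"
  shows "1 < c * sin \<psi>"
proof -
  have "1 = sqrt 3 / 2 * c_star"
    by (rule sqrt3_half_c_star[symmetric])
  also have "\<dots> < sin \<psi> * c_star"
    using sin_gt_sqrt3_half[OF assms(2,3)] c_star_gt_one by simp
  also have "\<dots> \<le> sin \<psi> * c"
    using sin_gt_zero[of \<psi>] assms by (intro mult_left_mono) auto
  finally show ?thesis
    by (simp add: mult.commute)
qed

lemma isCont_h1_integrand:
  assumes "1 < c * sin \<psi>"
  shows "isCont (h1_integrand c) \<psi>"
proof -
  have "isCont (\<lambda>\<psi>. c * sin \<psi>) \<psi>"
    by (intro continuous_intros)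
  from isCont_o2[OF this isCont_Rminus[OF assms]]
  have "isCont (\<lambda>\<psi>. Rminus (c * sin \<psi>)) \<psi>" .
  with Rminus_sq_less_one[OF assms] show ?thesis
    unfolding h1_integrand_def[abs_def] by (intro continuous_intros) auto
qed

lemma inverse_one_minus_Rminus_sq_antimono:
  assumes "1 < s" "s \<le> t"
  shows "1 / (1 - (Rminus t)\<^sup>2) \<le> 1 / (1 - (Rminus s)\<^sup>2)"
proof -
  have "(Rminus t)\<^sup>2 \<le> (Rminus s)\<^sup>2"
    using Rminus_antimono[of s t] Rminus[of t] assms by (intro power_mono) auto
  with Rminus_sq_less_one[OF assms(1)] show ?thesis
    by (intro divide_left_mono) auto
qed

lemma one_minus_Rminus_sq_ge:
  assumes "1 \<le> s" "s \<le> 123 / 100"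
  shows "(s - 1) / 3 \<le> (1 - (Rminus s)\<^sup>2)\<^sup>2"
proof -
  define R where "R = Rminus s"
  have "29 / 50 \<le> R"
    using Rminus_ge_29_50[OF assms] by (simp add: R_def)
  then have "(29 / 50)\<^sup>2 \<le> R\<^sup>2"
    by (intro power_mono) auto
  then have "(s - 1) * (1 / 3) \<le> (s - 1) * R\<^sup>2"
    using assms(1) by (intro mult_left_mono) (auto simp: power_divide)
  also have "\<dots> \<le> (1 - R\<^sup>2)\<^sup>2"
    using K_minus_one_mult_le[of R] Rminus[OF assms(1)] assms(2) by (simp add: R_def)
  finally show ?thesis
    by (simp add: R_def)
qed

lemma h1_integrand_c_star_le:
  assumes "pi / 3 < \<psi>" "\<psi> < 2 * pi / 3"
  shows "h1_integrand c_star \<psi> \<le> sqrt 24 / sqrt ((\<psi> - pi / 3) * (2 * pi / 3 - \<psi>))"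
proof -
  define s where "s = c_star * sin \<psi>"
  define q where "q = (\<psi> - pi / 3) * (2 * pi / 3 - \<psi>)"
  define R where "R = Rminus s"
  have s: "1 < s" "s \<le> c_star"
    using one_less_c_sin[of c_star \<psi>] assms c_star_gt_one by (auto simp: s_def mult_left_le)
  have R: "R\<^sup>2 < 1"
    using Rminus_sq_less_one[of s] s by (simp add: R_def)
  have "q / 8 \<le> sin \<psi> - sqrt 3 / 2"
    using sin_minus_sqrt3_half_ge[of \<psi>] assms by (simp add: q_def)
  also have "\<dots> \<le> c_star * (sin \<psi> - sqrt 3 / 2)"
    using sin_gt_sqrt3_half[OF assms] c_star_gt_one by simp
  also have "\<dots> = c_star * sin \<psi> - sqrt 3 / 2 * c_star"
    by (simp add: algebra_simps)
  also have "\<dots> = s - 1"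
    by (simp only: sqrt3_half_c_star s_def)
  finally have "q / 24 \<le> (1 - R\<^sup>2)\<^sup>2"
    using one_minus_Rminus_sq_ge[of s] s c_star_le by (simp add: R_def)
  then have "sqrt (q / 24) \<le> sqrt ((1 - R\<^sup>2)\<^sup>2)"
    by (rule real_sqrt_le_mono)
  then have "sqrt q / sqrt 24 \<le> 1 - R\<^sup>2"
    using R by (simp add: real_sqrt_divide)
  moreover have "0 < sqrt q / sqrt 24"
    using assms by (simp add: q_def)
  ultimately have "1 / (1 - R\<^sup>2) \<le> 1 / (sqrt q / sqrt 24)"
    using R by (intro divide_left_mono mult_pos_pos) auto
  then show ?thesis
    by (simp add: h1_integrand_def R_def s_def q_def)
qed

lemma h1_integrand_integrable:
  assumes "c_star \<le> c"
  shows "h1_integrand c integrable_on {pi / 3 .. 2 * pi / 3}"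
proof -
  let ?I = "{pi / 3 <..< 2 * pi / 3}"
  let ?g = "\<lambda>\<psi>. sqrt 24 * (1 / sqrt ((\<psi> - pi / 3) * (2 * pi / 3 - \<psi>)))"
  have "continuous_on ?I (h1_integrand c)"
    using isCont_h1_integrand one_less_c_sin[OF assms] by (intro continuous_at_imp_continuous_on) auto
  then have measurable: "h1_integrand c \<in> borel_measurable (lebesgue_on ?I)"
    by (rule continuous_imp_measurable_on_sets_lebesgue) simp
  have "(?g has_integral sqrt 24 * pi) {pi / 3 .. 2 * pi / 3}"
    by (rule has_integral_mult_right) (simp add: has_integral_inverse_sqrt_product)
  then have integrable: "?g integrable_on ?I"
    by (intro integrable_on_Icc_iff_Ioo[THEN iffD1] has_integral_integrable)
  have bound: "norm (h1_integrand c \<psi>) \<le> ?g \<psi>" if "\<psi> \<in> ?I" for \<psi>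
  proof -
    have "1 < c_star * sin \<psi>" "c_star * sin \<psi> \<le> c * sin \<psi>"
      using that one_less_c_sin[of c_star \<psi>] sin_gt_zero[of \<psi>] assms
      by (auto intro!: mult_right_mono)
    then have "h1_integrand c \<psi> \<le> h1_integrand c_star \<psi>"
      unfolding h1_integrand_def by (rule inverse_one_minus_Rminus_sq_antimono)
    moreover have "0 \<le> h1_integrand c \<psi>"
      using Rminus_sq_less_one one_less_c_sin[OF assms] that by (simp add: h1_integrand_def less_imp_le)
    ultimately show ?thesis
      using h1_integrand_c_star_le[of \<psi>] that by simp
  qed
  have "h1_integrand c integrable_on ?I"
    using measurable_bounded_by_integrable_imp_integrable[OF measurable integrable bound] by simp
  then show ?thesis
    by (simp add: integrable_on_Icc_iff_Ioo)
qed

text \<open>For \<open>c = c_star\<close> the integrand is \<open>1 / 0 = 0\<close> at both endpoints, so the pointwise bound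
  is only used on the open interval.\<close>
lemma h1_ge:
  assumes "c_star \<le> c"
  shows "pi / 3 / (1 - (Rminus c)\<^sup>2) \<le> h1 c"
proof -
  let ?I = "{pi / 3 <..< 2 * pi / 3}"
  define C where "C = 1 / (1 - (Rminus c)\<^sup>2)"
  have "((\<lambda>\<psi>. C) has_integral pi / 3 * C) ?I"
    using has_integral_const_real[of C "pi / 3" "2 * pi / 3"] by (simp add: has_integral_Icc_iff_Ioo[symmetric])
  moreover have "h1_integrand c integrable_on ?I"
    using h1_integrand_integrable[OF assms] by (simp add: integrable_on_Icc_iff_Ioo[symmetric])
  moreover have "C \<le> h1_integrand c \<psi>" if "\<psi> \<in> ?I" for \<psi>
    unfolding C_def h1_integrand_def using one_less_c_sin[OF assms] that c_star_gt_one assms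
    by (intro inverse_one_minus_Rminus_sq_antimono) (auto simp: mult_left_le)
  ultimately have "pi / 3 * C \<le> integral ?I (h1_integrand c)"
    by (intro has_integral_le[OF _ integrable_integral]) auto
  then show ?thesis
    by (simp add: h1_eq_integral integral_open_interval_real C_def)
qed

lemma h1_gt_half_pi:
  assumes "c_star \<le> c" "c \<le> 123 / 100"
  shows "pi / 2 < h1 c"
proof -
  define w where "w = Rminus c"
  have "1 < c"
    using assms c_star_gt_one by simp
  then have "29 / 50 \<le> w" "w\<^sup>2 < 1"
    using Rminus_ge_29_50[of c] Rminus_sq_less_one[of c] assms by (simp_all add: w_def)
  moreover have "(29 / 50)\<^sup>2 \<le> w\<^sup>2"
    using \<open>29 / 50 \<le> w\<close> by (rule power_mono) simp
  ultimately have "pi / 3 / (1 - (29 / 50)\<^sup>2) \<le> pi / 3 / (1 - w\<^sup>2)"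
    by (intro divide_left_mono mult_pos_pos) (auto simp: power_divide)
  moreover have "pi / 2 < pi / 3 / (1 - (29 / 50)\<^sup>2)"
    by (simp add: power_divide)
  ultimately show ?thesis
    using h1_ge[OF assms(1)] unfolding w_def by linarith
qed

section \<open>The integral h2\<close>

definition h2_integrand :: "real \<Rightarrow> real \<Rightarrow> real" where
  "h2_integrand c R = K R / (R * sqrt (c\<^sup>2 - (K R)\<^sup>2))"

lemma h2_eq_integral:
  "h2 c = integral {Rminus (sqrt 3 / 2 * c) .. Rplus (sqrt 3 / 2 * c)} (h2_integrand c)"
  unfolding h2_def h2_integrand_def ..

lemma one_le_sqrt3_half_mult:
  assumes "c_star \<le> c"
  shows "1 \<le> sqrt 3 / 2 * c"
proof -
  have "sqrt 3 / 2 * c_star \<le> sqrt 3 / 2 * c"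
    using assms by (rule mult_left_mono) simp
  then show ?thesis
    by (simp only: sqrt3_half_c_star)
qed

lemma h2_nonneg:
  assumes "c_star \<le> c"
  shows "0 \<le> h2 c"
proof (cases "h2_integrand c integrable_on {Rminus (sqrt 3 / 2 * c) .. Rplus (sqrt 3 / 2 * c)}")
  case True
  define S where "S = sqrt 3 / 2 * c"
  have "0 < c"
    using assms c_star_gt_one by simp
  then have S: "1 \<le> S" "S \<le> c"
    using one_le_sqrt3_half_mult[OF assms] mult_right_mono[of "sqrt 3 / 2" 1 c] sqrt3_less_2
    by (auto simp: S_def)
  have "0 \<le> h2_integrand c R" if "R \<in> {Rminus S .. Rplus S}" for R
  proof -
    have "0 < R"
      using that Rminus(1)[OF S(1)] by simp
    moreover have "K R \<le> c"
      using that K_le_between_Rminus_Rplus[OF S(1)] S(2) by force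
    ultimately show ?thesis
      using K_pos[of R] unfolding h2_integrand_def
      by (auto intro!: divide_nonneg_nonneg power_mono)
  qed
  with True show ?thesis
    unfolding h2_eq_integral S_def[symmetric] by (rule integral_nonneg)
next
  case False
  then show ?thesis
    unfolding h2_eq_integral by (simp add: not_integrable_integral)
qed

lemma sqrt_c_sq_minus_K_sq:
  assumes "0 < R" "K R < c"
  shows "0 < sqrt (c\<^sup>2 - (K R)\<^sup>2)" "sqrt (c\<^sup>2 - (K R)\<^sup>2) \<le> sqrt (c\<^sup>2 - 1)"
proof -
  have "1 \<le> K R"
    using K_ge_one[OF assms(1)] .
  then have "1 \<le> (K R)\<^sup>2" "(K R)\<^sup>2 < c\<^sup>2"
    using assms(2) by (auto intro: power_strict_mono)
  then show "0 < sqrt (c\<^sup>2 - (K R)\<^sup>2)" "sqrt (c\<^sup>2 - (K R)\<^sup>2) \<le> sqrt (c\<^sup>2 - 1)"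
    by simp_all
qed

lemma K_mult_div_sqrt_ge:
  assumes "0 < R" "K R < c"
  shows "(1 + R\<^sup>2) / (2 * sqrt (c\<^sup>2 - 1)) \<le> K R * R / sqrt (c\<^sup>2 - (K R)\<^sup>2)"
proof -
  have "(1 + R\<^sup>2) / 2 / sqrt (c\<^sup>2 - 1) \<le> K R * R / sqrt (c\<^sup>2 - (K R)\<^sup>2)"
    using K_mult_self_ge[OF assms(1)] sqrt_c_sq_minus_K_sq[OF assms] K_pos[OF assms(1)] assms(1)
    by (intro frac_le) auto
  then show ?thesis
    by simp
qed

lemma continuous_on_h2_integrand:
  assumes "0 < a" "\<And>R. R \<in> {a..b} \<Longrightarrow> K R < c"
  shows "continuous_on {a..b} (h2_integrand c)"
proof -
  have "continuous_on {a..b} K"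
    using continuous_on_K by (rule continuous_on_subset) (use assms(1) in auto)
  moreover have "R * sqrt (c\<^sup>2 - (K R)\<^sup>2) \<noteq> 0" if "R \<in> {a..b}" for R
    using sqrt_c_sq_minus_K_sq[of R c] assms that by auto
  ultimately show ?thesis
    unfolding h2_integrand_def[abs_def] by (intro continuous_intros) auto
qed

lemma arcsin_K_div_has_real_derivative:
  assumes "0 < R" "K R < c"
  shows "((\<lambda>R. arcsin (K R / c)) has_real_derivative K R * (R - 1 / R) / sqrt (c\<^sup>2 - (K R)\<^sup>2)) (at R)"
proof -
  have c: "0 < c"
    using K_pos[OF assms(1)] assms(2) by simp
  then have x: "-1 < K R / c" "K R / c < 1"
    using K_pos[OF assms(1)] assms(2) by (auto simp: field_simps)
  have "sqrt (1 - (K R / c)\<^sup>2) = sqrt (c\<^sup>2 - (K R)\<^sup>2) / c"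
    using c by (simp add: field_simps real_sqrt_divide)
  moreover have "((\<lambda>R. arcsin (K R / c)) has_real_derivative
      inverse (sqrt (1 - (K R / c)\<^sup>2)) * (K R * (R - 1 / R) / c)) (at R)"
    by (rule DERIV_chain2[OF DERIV_arcsin[OF x] DERIV_cdivide[OF K_has_real_derivative[OF assms(1)]]])
  ultimately show ?thesis
    using c sqrt_c_sq_minus_K_sq[OF assms] by (simp add: field_simps)
qed

lemma h2_integral_left_ge:
  assumes "0 < u" "u \<le> 1" "K u < c"
  shows "arcsin (K u / c) - arcsin (1 / c) + (2 / 3 - (u + u ^ 3 / 3) / 2) / sqrt (c\<^sup>2 - 1)
    \<le> integral {u..1} (h2_integrand c)"
proof -
  define sq1 where "sq1 = sqrt (c\<^sup>2 - 1)"
  have "0 < sq1"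
    using K_ge_one[OF assms(1)] assms(3) by (simp add: sq1_def power_strict_mono)
  define F where "F R = (R + R ^ 3 / 3) / (2 * sq1) - arcsin (K R / c)" for R
  define f where "f R = (1 + R\<^sup>2) / (2 * sq1) - K R * (R - 1 / R) / sqrt (c\<^sup>2 - (K R)\<^sup>2)" for R
  have R: "0 < R" "K R < c" if "R \<in> {u..1}" for R
    using that assms K_strict_antimono[of u R] by (force, cases "R = u") auto
  have "F 1 - F u \<le> integral {u..1} (h2_integrand c)"
  proof (rule integral_ge_antiderivative_diff)
    fix R assume "R \<in> {u..1}"
    note R = R[OF this]
    have "((\<lambda>R. (R + R ^ 3 / 3) / (2 * sq1)) has_real_derivative (1 + R\<^sup>2) / (2 * sq1)) (at R)"
      using \<open>0 < sq1\<close> by (auto intro!: derivative_eq_intros simp: field_simps power2_eq_square)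
    from DERIV_diff[OF this arcsin_K_div_has_real_derivative[OF R]]
    show "(F has_real_derivative f R) (at R within {u..1})"
      unfolding F_def[abs_def] f_def by (rule has_field_derivative_at_within)
    have "h2_integrand c R = K R * R / sqrt (c\<^sup>2 - (K R)\<^sup>2) - K R * (R - 1 / R) / sqrt (c\<^sup>2 - (K R)\<^sup>2)"
      using R(1) sqrt_c_sq_minus_K_sq[OF R] by (simp add: h2_integrand_def field_simps)
    then show "f R \<le> h2_integrand c R"
      using K_mult_div_sqrt_ge[OF R] by (simp add: f_def sq1_def)
  next
    show "h2_integrand c integrable_on {u..1}"
      using continuous_on_h2_integrand[of u 1 c] R assms(1) by (simp add: integrable_continuous_interval)
  qed (use assms in simp)
  moreover have "F 1 - F u = arcsin (K u / c) - arcsin (1 / c) + (2 / 3 - (u + u ^ 3 / 3) / 2) / sq1"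
    using \<open>0 < sq1\<close> by (simp add: F_def field_simps)
  ultimately show ?thesis
    by (simp add: sq1_def)
qed

lemma h2_integral_right_ge:
  assumes "1 \<le> v" "K v < c"
  shows "(v - 1 / v) / (2 * sqrt (c\<^sup>2 - 1)) \<le> integral {1..v} (h2_integrand c)"
proof -
  define sq1 where "sq1 = sqrt (c\<^sup>2 - 1)"
  have "0 < sq1"
    using K_ge_one[of v] assms by (simp add: sq1_def power_strict_mono)
  define F where "F R = (R - 1 / R) / (2 * sq1)" for R
  have R: "0 < R" "K R < c" if "R \<in> {1..v}" for R
    using that assms K_strict_mono[of R v] by (force, cases "R = v") auto
  have "F v - F 1 \<le> integral {1..v} (h2_integrand c)"
  proof (rule integral_ge_antiderivative_diff)
    fix R assume "R \<in> {1..v}"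
    note R = R[OF this]
    have "(F has_real_derivative (1 + R\<^sup>2) / (2 * sq1) / R\<^sup>2) (at R)"
      unfolding F_def[abs_def] using R(1) \<open>0 < sq1\<close>
      by (auto intro!: derivative_eq_intros simp: field_simps power2_eq_square)
    then show "(F has_real_derivative (1 + R\<^sup>2) / (2 * sq1) / R\<^sup>2) (at R within {1..v})"
      by (rule has_field_derivative_at_within)
    have "(1 + R\<^sup>2) / (2 * sq1) / R\<^sup>2 \<le> K R * R / sqrt (c\<^sup>2 - (K R)\<^sup>2) / R\<^sup>2"
      using K_mult_div_sqrt_ge[OF R] unfolding sq1_def by (rule divide_right_mono) simp
    also have "\<dots> = h2_integrand c R"
      using R(1) by (simp add: h2_integrand_def field_simps power2_eq_square)
    finally show "(1 + R\<^sup>2) / (2 * sq1) / R\<^sup>2 \<le> h2_integrand c R" .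
  next
    show "h2_integrand c integrable_on {1..v}"
      using continuous_on_h2_integrand[of 1 v c] R by (simp add: integrable_continuous_interval)
  qed (use assms in simp)
  then show ?thesis
    by (simp add: F_def sq1_def)
qed

text \<open>\<open>area_bound u v = \<integral>\<^sub>u\<^sup>1 (1 + R\<^sup>2) / 2 dR + \<integral>\<^sub>1\<^sup>v (1 + R\<^sup>2) / (2 * R\<^sup>2) dR\<close>.\<close>
definition area_bound :: "real \<Rightarrow> real \<Rightarrow> real" where
  "area_bound u v = 2 / 3 - (u + u ^ 3 / 3) / 2 + (v - 1 / v) / 2"

lemma area_bound_antimono:
  assumes "0 \<le> u" "u \<le> u'" "0 < v'" "v' \<le> v"
  shows "area_bound u' v' \<le> area_bound u v"
proof -
  have "u ^ 3 \<le> u' ^ 3"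
    using assms by (intro power_mono) auto
  moreover have "1 / v \<le> 1 / v'"
    using assms by (intro divide_left_mono) auto
  ultimately show ?thesis
    unfolding area_bound_def using assms(2,4)
    by (intro add_mono diff_mono divide_right_mono order_refl) auto
qed

text \<open>Multiplied by \<open>sqrt (c\<^sup>2 - 1)\<close>, the amounts by which the lower bounds for \<open>2 * h1 c\<close> and \<open>h2 c\<close>
  exceed \<open>2 * pi / 3\<close> and \<open>pi / 3 - arcsin (1 / c)\<close>.\<close>
definition h1_surplus :: "real \<Rightarrow> real" where
  "h1_surplus c = 2 * pi / 3 * ((Rminus c)\<^sup>2 / (1 - (Rminus c)\<^sup>2)) * sqrt (c\<^sup>2 - 1)"

definition h2_surplus :: "real \<Rightarrow> real" where
  "h2_surplus c = area_bound (Rminus (sqrt 3 / 2 * c)) (Rplus (sqrt 3 / 2 * c))"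

lemma h1_ge_surplus:
  assumes "c_star \<le> c" "1 < c"
  shows "2 * pi / 3 + h1_surplus c / sqrt (c\<^sup>2 - 1) \<le> 2 * h1 c"
proof -
  have "(Rminus c)\<^sup>2 < 1" "0 < sqrt (c\<^sup>2 - 1)"
    using Rminus_sq_less_one assms(2) by simp_all
  then have "2 * pi / 3 + h1_surplus c / sqrt (c\<^sup>2 - 1) = 2 * (pi / 3 / (1 - (Rminus c)\<^sup>2))"
    by (simp add: h1_surplus_def field_simps)
  with h1_ge[OF assms(1)] show ?thesis
    by simp
qed

lemma h2_ge_surplus:
  assumes "c_star < c"
  shows "pi / 3 - arcsin (1 / c) + h2_surplus c / sqrt (c\<^sup>2 - 1) \<le> h2 c"
proof -
  define S where "S = sqrt 3 / 2 * c"
  define u where "u = Rminus S"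
  define v where "v = Rplus S"
  have "0 < c"
    using assms c_star_gt_one by simp
  have "sqrt 3 / 2 * c_star < S"
    using assms by (simp add: S_def)
  then have "1 < S"
    by (simp only: sqrt3_half_c_star)
  moreover have "S < c"
    using \<open>0 < c\<close> sqrt3_less_2 by (simp add: S_def)
  ultimately have S: "1 < S" "S < c" .
  have u: "0 < u" "u \<le> 1" "K u = S" and v: "1 \<le> v" "K v = S"
    using Rminus[of S] Rplus[of S] S by (simp_all add: u_def v_def)
  have "K R < c" if "R \<in> {u..v}" for R
    using K_le_between_Rminus_Rplus[of S R] that S by (auto simp: u_def v_def)
  then have "h2_integrand c integrable_on {u..v}"
    using u(1) by (intro integrable_continuous_interval continuous_on_h2_integrand) auto
  then have "h2 c = integral {u..1} (h2_integrand c) + integral {1..v} (h2_integrand c)"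
    using u v by (simp add: h2_eq_integral Henstock_Kurzweil_Integration.integral_combine u_def v_def S_def)
  moreover have "pi / 3 - arcsin (1 / c) + (2 / 3 - (u + u ^ 3 / 3) / 2) / sqrt (c\<^sup>2 - 1)
      \<le> integral {u..1} (h2_integrand c)"
    using h2_integral_left_ge[OF u(1,2), of c] \<open>0 < c\<close> S sqrt3_less_2 by (simp add: u(3) arcsin_sqrt3_half S_def)
  moreover have "(v - 1 / v) / (2 * sqrt (c\<^sup>2 - 1)) \<le> integral {1..v} (h2_integrand c)"
    using h2_integral_right_ge[OF v(1), of c] S by (simp add: v(2))
  moreover have "h2_surplus c / sqrt (c\<^sup>2 - 1)
      = (2 / 3 - (u + u ^ 3 / 3) / 2) / sqrt (c\<^sup>2 - 1) + (v - 1 / v) / (2 * sqrt (c\<^sup>2 - 1))"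
    by (simp add: h2_surplus_def area_bound_def u_def v_def S_def add_divide_distrib)
  ultimately show ?thesis
    by linarith
qed

section \<open>Numerical verification\<close>

lemma area_bound_le_h2_surplus:
  assumes "c0 \<le> c" "1 < c0"
    and "0 < u" "u \<le> 1" "K u \<le> 866 / 1000 * c0"
    and "1 \<le> v" "K v \<le> 866 / 1000 * c0"
  shows "area_bound u v \<le> h2_surplus c"
proof -
  define S where "S = sqrt 3 / 2 * c"
  have "866 / 1000 * c0 \<le> S"
    using sqrt3_ge assms(1,2) unfolding S_def by (intro mult_mono) auto
  moreover have "1 \<le> K u"
    using K_ge_one[OF assms(3)] .
  ultimately have S: "1 \<le> S" "K u \<le> S" "K v \<le> S"
    using assms(5,7) by linarith+
  have "Rminus S \<le> u" "v \<le> Rplus S"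
    using Rminus_le_iff[OF S(1) assms(3,4)] le_Rplus_iff[OF S(1) assms(6)] S by simp_all
  with Rminus(1)[OF S(1)] assms(6) show ?thesis
    unfolding h2_surplus_def S_def[symmetric] by (intro area_bound_antimono) auto
qed

lemma h1_surplus_ge:
  assumes "c0 \<le> c" "c \<le> c1" "1 < c0"
    and "0 < w" "w < 1" "c1 \<le> K w"
    and "0 \<le> q" "q\<^sup>2 \<le> c0\<^sup>2 - 1"
  shows "2 * (314 / 100) / 3 * (w\<^sup>2 / (1 - w\<^sup>2)) * q \<le> h1_surplus c"
proof -
  have "w \<le> Rminus c"
    using le_Rminus_iff[of c w] assms by simp
  then have "w\<^sup>2 \<le> (Rminus c)\<^sup>2"
    using assms(4) by (intro power_mono) auto
  moreover have "(Rminus c)\<^sup>2 < 1"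
    using Rminus_sq_less_one assms(1,3) by simp
  moreover have "0 \<le> w\<^sup>2 / (1 - w\<^sup>2)"
    using assms(4,5) by (simp add: power_le_one)
  ultimately have ratio: "0 \<le> w\<^sup>2 / (1 - w\<^sup>2)" "w\<^sup>2 / (1 - w\<^sup>2) \<le> (Rminus c)\<^sup>2 / (1 - (Rminus c)\<^sup>2)"
    by (auto intro: frac_le)
  have "2 * (314 / 100) / 3 \<le> 2 * pi / 3"
    using pi_approx by simp
  with ratio have factor: "2 * (314 / 100) / 3 * (w\<^sup>2 / (1 - w\<^sup>2)) \<le> 2 * pi / 3 * ((Rminus c)\<^sup>2 / (1 - (Rminus c)\<^sup>2))"
    by (intro mult_mono) auto
  have "0 \<le> 2 * pi / 3 * ((Rminus c)\<^sup>2 / (1 - (Rminus c)\<^sup>2))"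
    using ratio by (intro mult_nonneg_nonneg) auto
  have "c0\<^sup>2 \<le> c\<^sup>2"
    using assms(1,3) by (intro power_mono) auto
  with assms(8) have "q \<le> sqrt (c\<^sup>2 - 1)"
    by (intro real_le_rsqrt) linarith
  with factor show ?thesis
    unfolding h1_surplus_def by (rule mult_mono) (use \<open>0 \<le> 2 * pi / 3 * _\<close> assms(7) in auto)
qed

lemma h1_surplus_nonneg:
  assumes "1 < c"
  shows "0 \<le> h1_surplus c"
  using Rminus_sq_less_one[OF assms] assms by (simp add: h1_surplus_def less_imp_le)

text \<open>On \<open>[c0, c1]\<close> the Taylor certificates place \<open>u\<close>, \<open>v\<close> and \<open>w\<close> on the correct sides of
  \<open>Rminus (sqrt 3 / 2 * c)\<close>, \<open>Rplus (sqrt 3 / 2 * c)\<close> and \<open>Rminus c\<close>, and \<open>q \<le> sqrt (c\<^sup>2 - 1)\<close>.\<close>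
lemma surplus_gt_one_on_interval:
  assumes "c0 \<le> c" "c \<le> c1" "1 < c0"
    and "0 < u" "u \<le> 1" "1 \<le> (1 + (1 - u\<^sup>2) / 32 + ((1 - u\<^sup>2) / 32)\<^sup>2 / 2) ^ 16 * u * (866 / 1000 * c0)"
    and "1 \<le> v" "v\<^sup>2 \<le> 33" "(1 + (v\<^sup>2 - 1) / 32 + ((v\<^sup>2 - 1) / 32)\<^sup>2) ^ 16 \<le> v * (866 / 1000 * c0)"
    and "0 < w" "w < 1" "(1 + (1 - w\<^sup>2) / 32 + ((1 - w\<^sup>2) / 32)\<^sup>2) ^ 16 * w * c1 \<le> 1"
    and "0 \<le> q" "q\<^sup>2 \<le> c0\<^sup>2 - 1"
    and "1 < 2 * (314 / 100) / 3 * (w\<^sup>2 / (1 - w\<^sup>2)) * q + area_bound u v"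
  shows "1 < h1_surplus c + h2_surplus c"
proof -
  have "area_bound u v \<le> h2_surplus c"
    using assms by (intro area_bound_le_h2_surplus[of c0] K_le_of_Taylor_below_one K_le_of_Taylor_above_one)
  moreover have "2 * (314 / 100) / 3 * (w\<^sup>2 / (1 - w\<^sup>2)) * q \<le> h1_surplus c"
    using assms by (intro h1_surplus_ge[of c0 c c1] K_ge_of_Taylor) auto
  ultimately show ?thesis
    using assms(15) by linarith
qed

lemma surplus_gt_one:
  assumes "123 / 100 \<le> c"
  shows "1 < h1_surplus c + h2_surplus c"
proof -
  consider "c \<le> 13 / 10" | "13 / 10 \<le> c" "c \<le> 14 / 10" | "14 / 10 \<le> c" "c \<le> 155 / 100"
    | "155 / 100 \<le> c" "c \<le> 18 / 10" | "18 / 10 \<le> c" "c \<le> 2" | "2 \<le> c"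
    by linarith
  then show ?thesis
  proof cases
    case 1
    with assms show ?thesis
      by (intro surplus_gt_one_on_interval[of "123 / 100" c "13 / 10" "77 / 100" "5 / 4" "53 / 100" "71 / 100"])
        (simp_all add: area_bound_def power_divide)
  next
    case 2
    then show ?thesis
      by (intro surplus_gt_one_on_interval[of "13 / 10" c "14 / 10" "17 / 25" "27 / 20" "12 / 25" "83 / 100"])
        (simp_all add: area_bound_def power_divide)
  next
    case 3
    then show ?thesis
      by (intro surplus_gt_one_on_interval[of "14 / 10" c "155 / 100" "3 / 5" "29 / 20" "21 / 50" "97 / 100"])
        (simp_all add: area_bound_def power_divide)
  next
    case 4
    then show ?thesis
      by (intro surplus_gt_one_on_interval[of "155 / 100" c "18 / 10" "13 / 25" "39 / 25" "7 / 20" "59 / 50"])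
        (simp_all add: area_bound_def power_divide)
  next
    case 5
    then show ?thesis
      by (intro surplus_gt_one_on_interval[of "18 / 10" c 2 "43 / 100" "17 / 10" "31 / 100" "149 / 100"])
        (simp_all add: area_bound_def power_divide)
  next
    case 6
    have "K (19 / 50) \<le> 866 / 1000 * 2"
      by (rule K_le_of_Taylor_below_one) (simp_all add: power_divide)
    moreover have "K (89 / 50) \<le> 866 / 1000 * 2"
      by (rule K_le_of_Taylor_above_one) (simp_all add: power_divide)
    ultimately have "area_bound (19 / 50) (89 / 50) \<le> h2_surplus c"
      using 6 by (intro area_bound_le_h2_surplus[of 2]) auto
    moreover have "1 < area_bound (19 / 50) (89 / 50)"
      by (simp add: area_bound_def power_divide)
    ultimately show ?thesis
      using h1_surplus_nonneg[of c] 6 by linarith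
  qed
qed

theorem mainTheorem12:
  fixes c :: real
  assumes "c \<ge> c_star"
  shows "2 * h1 c + h2 c > pi"
proof (cases "c \<le> 123 / 100")
  case True
  with assms have "pi / 2 < h1 c"
    by (rule h1_gt_half_pi)
  with h2_nonneg[OF assms] show ?thesis
    by linarith
next
  case False
  then have c: "c_star < c" "1 < c"
    using c_star_le by auto
  then have "0 < sqrt (c\<^sup>2 - 1)"
    by simp
  then have "1 / sqrt (c\<^sup>2 - 1) < h1_surplus c / sqrt (c\<^sup>2 - 1) + h2_surplus c / sqrt (c\<^sup>2 - 1)"
    using surplus_gt_one[of c] False by (simp add: add_divide_distrib[symmetric] divide_strict_right_mono)
  moreover have "arcsin (1 / c) \<le> 1 / sqrt (c\<^sup>2 - 1)"
    using arcsin_inverse_le c(2) .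
  ultimately show ?thesis
    using h1_ge_surplus[OF assms c(2)] h2_ge_surplus[OF c(1)] by linarith
qed

end
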